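(* Let $\mathbb K$ be a commutative semiring with $0\ne1$ and let $S:\mathrm{TXT}(\Delta)\to K$ be a regular alternating text series. Then $\pi(S):\Delta^*\to K$ is an algebraic formal power series.
   Context: Texts: a text over a finite alphabet $\Delta$ is $(V,\lambda,\le_1,\le_2)$ with $V$ finite nonempty, $\lambda:V\to\Delta$, $\le_1,\le_2$ linear orders on $V$, up to isomorphism. $\tau\circ\tau'$ (resp. $\tau\bullet\tau'$): disjoint union, all of $\tau$ before all of $\tau'$ in $\le_1$, and in $\le_2$ all of $\tau$ before $\tau'$ (resp. all of $\tau'$ before $\tau$). $\mathrm{TXT}(\Delta)$ (alternating texts) is the set of texts generated from singleton texts by $\circ,\bullet$. Projection: $\pi(\tau)$ is the word of labels read along $\le_1$, and $\pi(S)(w)=\sum_{\tau\in\mathrm{TXT}(\Delta),\pi(\tau)=w}S(\tau)$ (so $0$ at $\varepsilon$). WPA: $\mathcal A=(H,V,\Omega,\mu,\mu_{op},\mu_{cl},\lambda,\gamma)$, $H,V$ disjoint finite sets, $\Omega$ finite, $\mu:(H\times\Delta\times H)\cup(V\times\Delta\times V)\to K$, $\mu_{op},\mu_{cl}:(H\times\Omega\times V)\cup(V\times\Omega\times H)\to K$, $\lambda,\gamma:H\cup V\to K$. Runs (with label, weight, initial/final state): (1) for $(q_1,q_2)\in(H\times H)\cup(V\times V)$, $a\in\Delta$, $(q_1,a,q_2)$ is a run from $q_1$ to $q_2$ with label $a$ and weight $\mu(q_1,a,q_2)$; (2) if runs $r_1,r_2$ satisfy final$(r_1)=$ initial$(r_2)=q$,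 then $r_1r_2$ is a run from initial$(r_1)$ to final$(r_2)$ with weight the product and label $\mathrm{lab}(r_1)\circ\mathrm{lab}(r_2)$ if $q\in H$, $\mathrm{lab}(r_1)\bullet\mathrm{lab}(r_2)$ if $q\in V$; (3) if $r$ is a run obtained by rule (2), from $p_1$ to $p_2$, with $p_1\in H$ (resp. $V$) and $q_1,q_2\in V$ (resp. $H$), $s\in\Omega$, then $(q_1,(_s,p_1)\,r\,(p_2,)_s,q_2)$ is a run from $q_1$ to $q_2$ with label $\mathrm{lab}(r)$ and weight $\mu_{op}(q_1,s,p_1)\mathrm{wt}(r)\mu_{cl}(p_2,s,q_2)$. $\|\mathcal A\|(\tau)=\sum_{q_1,q_2}\lambda(q_1)\sum_r\mathrm{wt}(r)\gamma(q_2)$ over runs from $q_1$ to $q_2$ labeled $\tau$. A series $\mathrm{TXT}(\Delta)\to K$ is regular if it is some $\|\mathcal A\|$. Algebraic series: formal power series are maps $\Delta^*\to K$ with pointwise sum/scalar product and Cauchy product $(S_1S_2)(w)=\sum_{w=w_1w_2}S_1(w_1)S_2(w_2)$; words identified with characteristic series. For a finite variable set $\mathcal X$ disjoint from $\Delta$, a polynomial is a finitely supported map $(\Delta\cup\mathcal X)^*\to K$; an algebraic system is $(P_X)_{X\in\mathcal X}$; a solution is $(S_X)$ with $S_X=\sum(P_X,u_1X_1\cdots u_kX_ku_{k+1})u_1S_{X_1}\cdots u_kS_{X_k}u_{k+1}$ over the support of $P_X$. Proper: $P_X(Y)=P_X(\varepsilon)=0$ for all $X,Y$; quasiregular: $S(\varepsilon)=0$.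 A proper system has exactly one quasiregular solution; algebraic series are its components for some proper system. *)

theory Defs
  imports Main
begin

text \<open>A text (V, lab, le1, le2) is represented canonically up to isomorphism:
  V = {0..<n} ordered by le1 as the natural order, so the text is the pair (w, p)
  where w is the word of labels read along le1 and p is the list of positions
  enumerated in le2-order (a permutation of [0..<n]).\<close>

type_synonym 'd atext = "'d list \<times> nat list"

definition is_text :: "'d atext \<Rightarrow> bool" where
  "is_text t \<longleftrightarrow> fst t \<noteq> [] \<and> distinct (snd t) \<and> set (snd t) = {0..<length (fst t)}"

definition singleton_text :: "'d \<Rightarrow> 'd atext" where
  "singleton_text a = ([a], [0])"

text \<open>horizontal product (circ): t before u in both orders\<close>
definition tcomp :: "'d atext \<Rightarrow> 'd atext \<Rightarrow> 'd atext" where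
  "tcomp t u = (fst t @ fst u, snd t @ map (\<lambda>i. i + length (fst t)) (snd u))"

text \<open>vertical product (bullet): t before u in le1, u before t in le2\<close>
definition tbullet :: "'d atext \<Rightarrow> 'd atext \<Rightarrow> 'd atext" where
  "tbullet t u = (fst t @ fst u, map (\<lambda>i. i + length (fst t)) (snd u) @ snd t)"

inductive_set TXT :: "'d atext set" where
  sing: "singleton_text a \<in> TXT"
| comp: "t \<in> TXT \<Longrightarrow> u \<in> TXT \<Longrightarrow> tcomp t u \<in> TXT"
| bull: "t \<in> TXT \<Longrightarrow> u \<in> TXT \<Longrightarrow> tbullet t u \<in> TXT"

definition proj :: "('d atext \<Rightarrow> 'k::comm_monoid_add) \<Rightarrow> 'd list \<Rightarrow> 'k" where
  "proj S w = (\<Sum>t\<in>{t \<in> TXT. fst t = w}. S t)"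

text \<open>States and parenthesis symbols are natural numbers (w.l.o.g.: any finite set
  of states embeds in nat). A run is a string; we encode it as a list of tokens:
  an atomic run (q1,a,q2) is the token Atom q1 a q2; the opening part
  "(q1,(_s,p1)" of rule (3) is the token Opn q1 s p1 and the closing part
  "(p2,)_s,q2)" is Cls p2 s q2.\<close>

datatype 'd tok = Atom nat 'd nat | Opn nat nat nat | Cls nat nat nat

text \<open>is_run H V Om r q1 q2 l b: the string r is a run from q1 to q2 with label l;
  b records whether this derivation ends with rule (2).\<close>
inductive is_run :: "nat set \<Rightarrow> nat set \<Rightarrow> nat set \<Rightarrow> 'd tok list \<Rightarrow> nat \<Rightarrow> nat
    \<Rightarrow> 'd atext \<Rightarrow> bool \<Rightarrow> bool" for H V Om where
  atom: "(q1 \<in> H \<and> q2 \<in> H) \<or> (q1 \<in> V \<and> q2 \<in> V) \<Longrightarrow>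
     is_run H V Om [Atom q1 a q2] q1 q2 (singleton_text a) False"
| concH: "is_run H V Om r1 q1 q l1 b1 \<Longrightarrow> is_run H V Om r2 q q2 l2 b2 \<Longrightarrow> q \<in> H \<Longrightarrow>
     is_run H V Om (r1 @ r2) q1 q2 (tcomp l1 l2) True"
| concV: "is_run H V Om r1 q1 q l1 b1 \<Longrightarrow> is_run H V Om r2 q q2 l2 b2 \<Longrightarrow> q \<in> V \<Longrightarrow>
     is_run H V Om (r1 @ r2) q1 q2 (tbullet l1 l2) True"
| paren: "is_run H V Om r p1 p2 l True \<Longrightarrow> s \<in> Om \<Longrightarrow>
     (p1 \<in> H \<and> q1 \<in> V \<and> q2 \<in> V) \<or> (p1 \<in> V \<and> q1 \<in> H \<and> q2 \<in> H) \<Longrightarrow>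
     is_run H V Om ([Opn q1 s p1] @ r @ [Cls p2 s q2]) q1 q2 l False"

fun tok_weight :: "(nat \<Rightarrow> 'd \<Rightarrow> nat \<Rightarrow> 'k) \<Rightarrow> (nat \<Rightarrow> nat \<Rightarrow> nat \<Rightarrow> 'k)
    \<Rightarrow> (nat \<Rightarrow> nat \<Rightarrow> nat \<Rightarrow> 'k) \<Rightarrow> 'd tok \<Rightarrow> 'k" where
  "tok_weight mu mop mcl (Atom p a q) = mu p a q"
| "tok_weight mu mop mcl (Opn q s p) = mop q s p"
| "tok_weight mu mop mcl (Cls p s q) = mcl p s q"

definition run_weight :: "(nat \<Rightarrow> 'd \<Rightarrow> nat \<Rightarrow> 'k::monoid_mult) \<Rightarrow> (nat \<Rightarrow> nat \<Rightarrow> nat \<Rightarrow> 'k)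
    \<Rightarrow> (nat \<Rightarrow> nat \<Rightarrow> nat \<Rightarrow> 'k) \<Rightarrow> 'd tok list \<Rightarrow> 'k" where
  "run_weight mu mop mcl r = prod_list (map (tok_weight mu mop mcl) r)"

definition wpa_behaviour :: "nat set \<Rightarrow> nat set \<Rightarrow> nat set \<Rightarrow> (nat \<Rightarrow> 'd \<Rightarrow> nat \<Rightarrow> 'k::comm_semiring_1)
    \<Rightarrow> (nat \<Rightarrow> nat \<Rightarrow> nat \<Rightarrow> 'k) \<Rightarrow> (nat \<Rightarrow> nat \<Rightarrow> nat \<Rightarrow> 'k) \<Rightarrow> (nat \<Rightarrow> 'k) \<Rightarrow> (nat \<Rightarrow> 'k)
    \<Rightarrow> 'd atext \<Rightarrow> 'k" where
  "wpa_behaviour H V Om mu mop mcl lam gam t =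
     (\<Sum>q1\<in>H \<union> V. \<Sum>q2\<in>H \<union> V.
        lam q1 * (\<Sum>r\<in>{r. \<exists>b. is_run H V Om r q1 q2 t b}. run_weight mu mop mcl r) * gam q2)"

definition regular_text_series :: "('d atext \<Rightarrow> 'k::comm_semiring_1) \<Rightarrow> bool" where
  "regular_text_series S \<longleftrightarrow>
     (\<exists>H V Om mu mop mcl lam gam. finite H \<and> finite V \<and> H \<inter> V = {} \<and> finite Om \<and>
        (\<forall>t\<in>TXT. S t = wpa_behaviour H V Om mu mop mcl lam gam t))"

type_synonym ('d,'k) fpser = "'d list \<Rightarrow> 'k"

definition char_ser :: "'d list \<Rightarrow> ('d,'k::zero_neq_one) fpser" where
  "char_ser u = (\<lambda>w. if w = u then 1 else 0)"

definition cauchy :: "('d,'k::comm_semiring_1) fpser \<Rightarrow> ('d,'k) fpser \<Rightarrow> ('d,'k) fpser" where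
  "cauchy S1 S2 = (\<lambda>w. \<Sum>i\<le>length w. S1 (take i w) * S2 (drop i w))"

text \<open>Variables are natural numbers; words over the alphabet together with the
  variables are lists over 'd + nat (Inl: letter, Inr: variable).\<close>

primrec subst_word :: "(nat \<Rightarrow> ('d,'k::comm_semiring_1) fpser) \<Rightarrow> ('d + nat) list \<Rightarrow> ('d,'k) fpser" where
  "subst_word Sol [] = char_ser []"
| "subst_word Sol (x # m) =
     cauchy (case x of Inl a \<Rightarrow> char_ser [a] | Inr X \<Rightarrow> Sol X) (subst_word Sol m)"

definition poly_support :: "(('d + nat) list \<Rightarrow> 'k::zero) \<Rightarrow> ('d + nat) list set" where
  "poly_support P = {m. P m \<noteq> 0}"

definition alg_system :: "nat set \<Rightarrow> (nat \<Rightarrow> ('d + nat) list \<Rightarrow> 'k::zero) \<Rightarrow> bool" where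
  "alg_system Xs P \<longleftrightarrow> finite Xs \<and>
     (\<forall>X\<in>Xs. finite (poly_support (P X)) \<and>
        (\<forall>m\<in>poly_support (P X). \<forall>Y. Inr Y \<in> set m \<longrightarrow> Y \<in> Xs))"

definition proper_system :: "nat set \<Rightarrow> (nat \<Rightarrow> ('d + nat) list \<Rightarrow> 'k::zero) \<Rightarrow> bool" where
  "proper_system Xs P \<longleftrightarrow> (\<forall>X\<in>Xs. P X [] = 0 \<and> (\<forall>Y\<in>Xs. P X [Inr Y] = 0))"

definition is_solution :: "nat set \<Rightarrow> (nat \<Rightarrow> ('d + nat) list \<Rightarrow> 'k::comm_semiring_1)
    \<Rightarrow> (nat \<Rightarrow> ('d,'k) fpser) \<Rightarrow> bool" where
  "is_solution Xs P Sol \<longleftrightarrow>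
     (\<forall>X\<in>Xs. \<forall>w. Sol X w = (\<Sum>m\<in>poly_support (P X). P X m * subst_word Sol m w))"

definition quasiregular :: "('d,'k::zero) fpser \<Rightarrow> bool" where
  "quasiregular S \<longleftrightarrow> S [] = 0"

definition algebraic_series :: "('d,'k::comm_semiring_1) fpser \<Rightarrow> bool" where
  "algebraic_series S \<longleftrightarrow>
     (\<exists>Xs P Sol X0. alg_system Xs P \<and> proper_system Xs P \<and> is_solution Xs P Sol \<and>
        (\<forall>X\<in>Xs. quasiregular (Sol X)) \<and> X0 \<in> Xs \<and> Sol X0 = S)"

end

theory Submission
  imports Defs "HOL-Library.Nat_Bijection"
begin

text \<open>Classify the runs from p to q by whether their derivation ends with rule (2). A run ending
  with rule (2) factors uniquely, at its first proper prefix of parenthesis depth zero, into a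
  run not ending with rule (2) followed by an arbitrary run; a run not ending with rule (2) is a
  single letter or a parenthesised run ending with rule (2). Since the label word of a product
  is the concatenation of the label words, the projected series U(p,q) and C(p,q) of the two
  classes satisfy the proper system
    C(p,q) = \<Sum>r U(p,r) (U(r,q) + C(r,q)),
    U(p,q) = \<Sum>a \<mu>(p,a,q) a + \<Sum>s,p',q' \<mu>op(p,s,p') \<mu>cl(q',s,q) C(p',q'),
  and \<pi>(S) = \<Sum>p,q \<lambda>(p) \<gamma>(q) (U(p,q) + C(p,q)) is one more component once this sum is
  expanded by the first two equations.\<close>

section \<open>Texts\<close>

definition wf_text :: "'d atext \<Rightarrow> bool" where
  "wf_text t \<longleftrightarrow> fst t \<noteq> [] \<and> length (snd t) = length (fst t) \<and> set (snd t) \<subseteq> {0..<length (fst t)}"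

lemma wf_text_singleton: "wf_text (singleton_text a)"
  by (simp add: wf_text_def singleton_text_def)

lemma wf_text_tcomp: "wf_text t \<Longrightarrow> wf_text u \<Longrightarrow> wf_text (tcomp t u)"
  by (auto simp: wf_text_def tcomp_def)

lemma wf_text_tbullet: "wf_text t \<Longrightarrow> wf_text u \<Longrightarrow> wf_text (tbullet t u)"
  by (auto simp: wf_text_def tbullet_def)

lemma TXT_wf_text: "t \<in> TXT \<Longrightarrow> wf_text t"
  by (induction rule: TXT.induct) (auto intro: wf_text_singleton wf_text_tcomp wf_text_tbullet)

lemma finite_wf_texts_word: "finite {t. wf_text t \<and> fst t = w}"
proof (rule finite_subset)
  show "{t. wf_text t \<and> fst t = w} \<subseteq> {w} \<times> {p. set p \<subseteq> {0..<length w} \<and> length p \<le> length w}"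
    by (auto simp: wf_text_def)
  show "finite ({w} \<times> {p. set p \<subseteq> {0..<length w} \<and> length p \<le> length w})"
    by (intro finite_cartesian_product finite_lists_length_le) auto
qed

lemma tcomp_assoc: "tcomp (tcomp a b) c = tcomp a (tcomp b c)"
  by (simp add: tcomp_def)

lemma tbullet_assoc: "tbullet (tbullet a b) c = tbullet a (tbullet b c)"
  by (simp add: tbullet_def)

lemma word_singleton_text [simp]: "fst (singleton_text a) = [a]"
  by (simp add: singleton_text_def)

lemma word_tcomp [simp]: "fst (tcomp t u) = fst t @ fst u"
  by (simp add: tcomp_def)

lemma word_tbullet [simp]: "fst (tbullet t u) = fst t @ fst u"
  by (simp add: tbullet_def)

lemma tcomp_cancel:
  assumes "tcomp a b = tcomp a' b'" "length (fst a) = length (fst a')"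
    and "length (snd a) = length (fst a)" "length (snd a') = length (fst a')"
  shows "a = a' \<and> b = b'"
proof -
  have words: "fst a = fst a'" "fst b = fst b'"
    using assms(1,2) by (simp_all add: tcomp_def)
  have "snd a = snd a'" "map (\<lambda>i. i + length (fst a)) (snd b) = map (\<lambda>i. i + length (fst a)) (snd b')"
    using assms by (simp_all add: tcomp_def)
  moreover have "inj (\<lambda>i::nat. i + length (fst a))"
    by (simp add: inj_def)
  ultimately have "snd a = snd a'" "snd b = snd b'"
    by (simp_all add: inj_map_eq_map)
  with words show ?thesis
    by (simp add: prod_eq_iff)
qed

lemma tbullet_cancel:
  assumes "tbullet a b = tbullet a' b'" "length (fst a) = length (fst a')"
    and "length (snd b) = length (fst b)" "length (snd b') = length (fst b')"
  shows "a = a' \<and> b = b'"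
proof -
  have words: "fst a = fst a'" "fst b = fst b'"
    using assms(1,2) by (simp_all add: tbullet_def)
  then have "length (snd b) = length (snd b')"
    using assms(3,4) by simp
  then have "snd a = snd a'" "map (\<lambda>i. i + length (fst a)) (snd b) = map (\<lambda>i. i + length (fst a)) (snd b')"
    using assms(1,2) by (simp_all add: tbullet_def)
  moreover have "inj (\<lambda>i::nat. i + length (fst a))"
    by (simp add: inj_def)
  ultimately have "snd a = snd a'" "snd b = snd b'"
    by (simp_all add: inj_map_eq_map)
  with words show ?thesis
    by (simp add: prod_eq_iff)
qed

section \<open>Runs as token strings\<close>

fun tok_target :: "'d tok \<Rightarrow> nat" where
  "tok_target (Atom p a q) = q"
| "tok_target (Opn q s p) = p"
| "tok_target (Cls p s q) = q"

fun tok_letters :: "'d tok \<Rightarrow> 'd list" where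
  "tok_letters (Atom p a q) = [a]"
| "tok_letters (Opn q s p) = []"
| "tok_letters (Cls p s q) = []"

fun tok_depth :: "'d tok \<Rightarrow> int" where
  "tok_depth (Atom p a q) = 0"
| "tok_depth (Opn q s p) = 1"
| "tok_depth (Cls p s q) = -1"

definition depth :: "'d tok list \<Rightarrow> int" where
  "depth r = sum_list (map tok_depth r)"

lemma depth_Nil [simp]: "depth [] = 0"
  and depth_Cons [simp]: "depth (x # r) = tok_depth x + depth r"
  and depth_append [simp]: "depth (r @ r') = depth r + depth r'"
  by (simp_all add: depth_def)

definition tokens :: "nat set \<Rightarrow> nat set \<Rightarrow> 'd tok set" where
  "tokens Q Om = {x. case x of
       Atom p a q \<Rightarrow> p \<in> Q \<and> q \<in> Q
     | Opn p s q \<Rightarrow> p \<in> Q \<and> s \<in> Om \<and> q \<in> Q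
     | Cls p s q \<Rightarrow> p \<in> Q \<and> s \<in> Om \<and> q \<in> Q}"

lemma finite_tokens:
  assumes "finite Q" "finite Om"
  shows "finite (tokens Q Om :: 'd::finite tok set)"
proof (rule finite_subset)
  show "tokens Q Om \<subseteq> (\<lambda>(p,a,q). Atom p a q) ` (Q \<times> (UNIV :: 'd set) \<times> Q)
      \<union> (\<lambda>(p,s,q). Opn p s q) ` (Q \<times> Om \<times> Q) \<union> (\<lambda>(p,s,q). Cls p s q) ` (Q \<times> Om \<times> Q)"
  proof
    fix x :: "'d tok"
    assume "x \<in> tokens Q Om"
    then show "x \<in> (\<lambda>(p,a,q). Atom p a q) ` (Q \<times> UNIV \<times> Q)
      \<union> (\<lambda>(p,s,q). Opn p s q) ` (Q \<times> Om \<times> Q) \<union> (\<lambda>(p,s,q). Cls p s q) ` (Q \<times> Om \<times> Q)"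
      by (cases x) (auto simp: tokens_def image_iff)
  qed
qed (use assms in simp)

lemma is_run_nonempty: "is_run H V Om r q1 q2 t b \<Longrightarrow> r \<noteq> []"
  by (induction rule: is_run.induct) auto

lemma is_run_word: "is_run H V Om r q1 q2 t b \<Longrightarrow> fst t = concat (map tok_letters r)"
  by (induction rule: is_run.induct) (auto simp: singleton_text_def)

lemma is_run_label_TXT: "is_run H V Om r q1 q2 t b \<Longrightarrow> t \<in> TXT"
  by (induction rule: is_run.induct) (auto intro: TXT.intros)

lemma is_run_wf_label: "is_run H V Om r q1 q2 t b \<Longrightarrow> wf_text t"
  using TXT_wf_text is_run_label_TXT by blast

lemma is_run_target: "is_run H V Om r q1 q2 t b \<Longrightarrow> tok_target (last r) = q2"
  by (induction rule: is_run.induct) (auto dest: is_run_nonempty)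

lemma is_run_states: "is_run H V Om r q1 q2 t b \<Longrightarrow> q1 \<in> H \<union> V \<and> q2 \<in> H \<union> V"
  by (induction rule: is_run.induct) blast+

lemma is_run_same_side:
  "is_run H V Om r q1 q2 t b \<Longrightarrow> H \<inter> V = {} \<Longrightarrow> q1 \<in> H \<longleftrightarrow> q2 \<in> H"
  by (induction rule: is_run.induct) blast+

lemma is_run_tokens: "is_run H V Om r q1 q2 t b \<Longrightarrow> set r \<subseteq> tokens (H \<union> V) Om"
  by (induction rule: is_run.induct) (auto simp: tokens_def dest: is_run_states)

text \<open>The slack of 4 for runs ending with rule (2) pays for the two tokens added by rule (3).\<close>

lemma is_run_length: "is_run H V Om r q1 q2 t b \<Longrightarrow> length r + (if b then 4 else 2) \<le> 3 * length (fst t)"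
  by (induction rule: is_run.induct) (auto simp: singleton_text_def split: if_splits)

lemma is_run_depth:
  assumes "is_run H V Om r q1 q2 t b"
  shows "depth r = 0 \<and> (\<forall>k. 0 \<le> depth (take k r)) \<and>
    (\<not> b \<longrightarrow> length r = 1 \<or> (\<forall>k. 0 < k \<and> k < length r \<longrightarrow> 1 \<le> depth (take k r)))"
  using assms
proof (induction rule: is_run.induct)
  case (atom q1 q2 a)
  then show ?case by (auto simp: take_Cons')
next
  case (concH r1 q1 q l1 b1 r2 q2 l2 b2)
  then show ?case by (simp add: take_append)
next
  case (concV r1 q1 q l1 b1 r2 q2 l2 b2)
  then show ?case by (simp add: take_append)
next
  case (paren r p1 p2 l s q1 q2)
  have inner: "1 \<le> depth (take k ([Opn q1 s p1] @ r @ [Cls p2 s q2]))"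
    if k_pos: "0 < k" and k_lt: "k < length ([Opn q1 s p1] @ r @ [Cls p2 s q2])" for k
  proof -
    obtain j where j: "k = Suc j"
      using k_pos by (cases k) auto
    with k_lt have "j \<le> length r"
      by simp
    with j have "take k ([Opn q1 s p1] @ r @ [Cls p2 s q2]) = Opn q1 s p1 # take j r"
      by simp
    then show ?thesis using paren.IH by simp
  qed
  moreover have "0 \<le> depth (take k ([Opn q1 s p1] @ r @ [Cls p2 s q2]))" for k
    using inner[of k] paren.IH
    by (cases "k = 0"; cases "k < length ([Opn q1 s p1] @ r @ [Cls p2 s q2])") auto
  ultimately show ?case using paren.IH by simp
qed

text \<open>A run not ending with rule (2) has no proper nonempty prefix of depth zero; this is what
  makes the factorisations below unique.\<close>

lemma unit_run_no_balanced_prefix: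
  assumes "is_run H V Om r q1 q2 t False" "0 < k" "k < length r"
  shows "depth (take k r) \<noteq> 0"
proof -
  have "length r \<noteq> 1" using assms(2,3) by simp
  with is_run_depth[OF assms(1)] have "1 \<le> depth (take k r)"
    using assms(2,3) by blast
  then show ?thesis by simp
qed

lemma unit_run_not_conc:
  assumes "is_run H V Om r q1 q2 t False"
  shows "\<not> is_run H V Om r q1' q2' t' True"
proof
  assume "is_run H V Om r q1' q2' t' True"
  then obtain r1 r2 q t1 t2 b1 b2 where
    split: "r = r1 @ r2" "is_run H V Om r1 q1' q t1 b1" "is_run H V Om r2 q q2' t2 b2"
    by (cases rule: is_run.cases) auto
  have "0 < length r1" "length r1 < length r"
    using split is_run_nonempty[OF split(2)] is_run_nonempty[OF split(3)] by simp_all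
  moreover have "depth (take (length r1) r) = 0"
    using split(1) is_run_depth[OF split(2)] by simp
  ultimately show False
    using unit_run_no_balanced_prefix[OF assms] by blast
qed

lemma unit_run_prefix_unique:
  assumes "r1 @ r2 = r1' @ r2'"
    and "is_run H V Om r1 q1 q2 t False" "is_run H V Om r1' q1' q2' t' False"
  shows "r1 = r1'"
proof -
  have "r = r'"
    if "r @ u = r' @ u'" "length r \<le> length r'"
      "is_run H V Om r p1 p2 s False" "is_run H V Om r' p1' p2' s' False"
    for r u r' u' p1 p2 s p1' p2' s'
  proof (rule ccontr)
    assume "r \<noteq> r'"
    have prefix: "take (length r) r' = r"
      using arg_cong[OF that(1), of "take (length r)"] that(2) by simp
    with \<open>r \<noteq> r'\<close> have "length r < length r'"
      using that(2) by (metis le_neq_implies_less take_all)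
    with unit_run_no_balanced_prefix[OF that(4), of "length r"] prefix show False
      using is_run_nonempty[OF that(3)] is_run_depth[OF that(3)] by simp
  qed
  note shorter_prefix = this
  show ?thesis
  proof (cases "length r1 \<le> length r1'")
    case True
    then show ?thesis by (rule shorter_prefix[OF assms(1) _ assms(2,3)])
  next
    case False
    then show ?thesis using shorter_prefix[OF assms(1)[symmetric] _ assms(3,2)] by simp
  qed
qed

text \<open>Rule (2) may be applied in any association; since both products are associative and the
  side of the junction state selects the product, the factorisation can be moved to the left.\<close>

lemma conc_run_split:
  assumes "is_run H V Om r q1 q2 t True" "H \<inter> V = {}"
  obtains q r1 t1 r2 t2 b2 where "r = r1 @ r2"
    "is_run H V Om r1 q1 q t1 False" "is_run H V Om r2 q q2 t2 b2"
    "q \<in> H \<and> t = tcomp t1 t2 \<or> q \<in> V \<and> t = tbullet t1 t2"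
proof -
  have "\<exists>q r1 t1 r2 t2 b2. r = r1 @ r2 \<and> is_run H V Om r1 q1 q t1 False \<and>
      is_run H V Om r2 q q2 t2 b2 \<and> (q \<in> H \<and> t = tcomp t1 t2 \<or> q \<in> V \<and> t = tbullet t1 t2)"
    if "is_run H V Om r q1 q2 t b" "b" for b
    using that
  proof (induction rule: is_run.induct)
    case (concH r1 q1 q l1 b1 r2 q2 l2 b2)
    show ?case
    proof (cases b1)
      case False
      with concH.hyps show ?thesis
        by (intro exI[of _ q] exI[of _ r1] exI[of _ l1] exI[of _ r2] exI[of _ l2] exI[of _ b2]) simp
    next
      case True
      with concH.IH(1) obtain q' u1 s1 u2 s2 c2 where split: "r1 = u1 @ u2"
        "is_run H V Om u1 q1 q' s1 False" "is_run H V Om u2 q' q s2 c2"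
        "q' \<in> H \<and> l1 = tcomp s1 s2 \<or> q' \<in> V \<and> l1 = tbullet s1 s2"
        by blast
      have "q' \<in> H"
        using is_run_same_side[OF split(3) assms(2)] concH.hyps(3) by simp
      with split(4) assms(2) have "l1 = tcomp s1 s2"
        by blast
      moreover have "is_run H V Om (u2 @ r2) q' q2 (tcomp s2 l2) True"
        using is_run.concH[OF split(3) concH.hyps(2,3)] .
      moreover have "r1 @ r2 = u1 @ (u2 @ r2)" "tcomp l1 l2 = tcomp s1 (tcomp s2 l2)"
        using split(1) \<open>l1 = tcomp s1 s2\<close> by (simp_all add: tcomp_assoc)
      ultimately show ?thesis
        using split(2) \<open>q' \<in> H\<close> by blast
    qed
  next
    case (concV r1 q1 q l1 b1 r2 q2 l2 b2)
    show ?case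
    proof (cases b1)
      case False
      with concV.hyps show ?thesis
        by (intro exI[of _ q] exI[of _ r1] exI[of _ l1] exI[of _ r2] exI[of _ l2] exI[of _ b2]) simp
    next
      case True
      with concV.IH(1) obtain q' u1 s1 u2 s2 c2 where split: "r1 = u1 @ u2"
        "is_run H V Om u1 q1 q' s1 False" "is_run H V Om u2 q' q s2 c2"
        "q' \<in> H \<and> l1 = tcomp s1 s2 \<or> q' \<in> V \<and> l1 = tbullet s1 s2"
        by blast
      have "q \<notin> H"
        using concV.hyps(3) assms(2) by blast
      then have "q' \<notin> H"
        using is_run_same_side[OF split(3) assms(2)] by simp
      with split(4) have "q' \<in> V" "l1 = tbullet s1 s2"
        by blast+
      moreover have "is_run H V Om (u2 @ r2) q' q2 (tbullet s2 l2) True"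
        using is_run.concV[OF split(3) concV.hyps(2,3)] .
      moreover have "r1 @ r2 = u1 @ (u2 @ r2)" "tbullet l1 l2 = tbullet s1 (tbullet s2 l2)"
        using split(1) \<open>l1 = tbullet s1 s2\<close> by (simp_all add: tbullet_assoc)
      ultimately show ?thesis
        using split(2) by blast
    qed
  qed simp_all
  with assms(1) that show ?thesis
    by blast
qed

section \<open>Series of runs of a fixed automaton\<close>

locale wpa =
  fixes H V Om :: "nat set"
    and mu :: "nat \<Rightarrow> 'd::finite \<Rightarrow> nat \<Rightarrow> 'k::comm_semiring_1"
    and mop mcl :: "nat \<Rightarrow> nat \<Rightarrow> nat \<Rightarrow> 'k"
    and lam gam :: "nat \<Rightarrow> 'k"
  assumes finite_H: "finite H" and finite_V: "finite V" and finite_Om: "finite Om"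
    and disjoint_HV: "H \<inter> V = {}"
begin

abbreviation states :: "nat set" where
  "states \<equiv> H \<union> V"

lemma finite_states: "finite states"
  using finite_H finite_V by simp

definition runs :: "bool set \<Rightarrow> nat \<Rightarrow> nat \<Rightarrow> 'd list \<Rightarrow> ('d tok list \<times> 'd atext) set" where
  "runs B q1 q2 w = {(r, t). \<exists>b\<in>B. is_run H V Om r q1 q2 t b \<and> fst t = w}"

definition run_series :: "bool set \<Rightarrow> nat \<Rightarrow> nat \<Rightarrow> ('d, 'k) fpser" where
  "run_series B q1 q2 w = (\<Sum>p\<in>runs B q1 q2 w. run_weight mu mop mcl (fst p))"

lemma mem_runs: "(r, t) \<in> runs B q1 q2 w \<longleftrightarrow> (\<exists>b\<in>B. is_run H V Om r q1 q2 t b \<and> fst t = w)"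
  by (simp add: runs_def)

lemma mem_runs_singleton [simp]:
  "(r, t) \<in> runs {b} q1 q2 w \<longleftrightarrow> is_run H V Om r q1 q2 t b \<and> fst t = w"
  by (simp add: runs_def)

lemma finite_runs: "finite (runs B q1 q2 w)"
proof (rule finite_subset)
  show "runs B q1 q2 w \<subseteq> {r. set r \<subseteq> tokens states Om \<and> length r \<le> 3 * length w} \<times>
      {t. wf_text t \<and> fst t = w}"
    using is_run_tokens is_run_length is_run_wf_label
    by (fastforce simp: runs_def split: if_splits)
  show "finite ({r :: 'd tok list. set r \<subseteq> tokens states Om \<and> length r \<le> 3 * length w} \<times>
      {t. wf_text t \<and> fst t = w})"
    by (intro finite_cartesian_product finite_lists_length_le finite_tokens finite_states
        finite_Om finite_wf_texts_word)
qed

lemma run_series_Nil: "run_series B q1 q2 [] = 0"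
proof -
  have "runs B q1 q2 [] = {}"
    using is_run_wf_label by (fastforce simp: runs_def wf_text_def)
  then show ?thesis by (simp add: run_series_def)
qed

lemma run_series_UNIV: "run_series UNIV q1 q2 w = run_series {False} q1 q2 w + run_series {True} q1 q2 w"
proof -
  have "runs UNIV q1 q2 w = runs {False} q1 q2 w \<union> runs {True} q1 q2 w"
    by (auto simp: runs_def ex_bool_eq)
  moreover have "runs {False} q1 q2 w \<inter> runs {True} q1 q2 w = {}"
    using unit_run_not_conc by (fastforce simp: runs_def)
  ultimately show ?thesis
    by (simp add: run_series_def sum.union_disjoint finite_runs)
qed

definition glue :: "nat \<Rightarrow> 'd atext \<Rightarrow> 'd atext \<Rightarrow> 'd atext" where
  "glue q = (if q \<in> H then tcomp else tbullet)"

lemma word_glue [simp]: "fst (glue q t u) = fst t @ fst u"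
  by (simp add: glue_def)

definition conc_factors :: "nat \<Rightarrow> nat \<Rightarrow> 'd list
    \<Rightarrow> (nat \<times> nat \<times> ('d tok list \<times> 'd atext) \<times> ('d tok list \<times> 'd atext)) set" where
  "conc_factors q1 q2 w = (SIGMA q:states. SIGMA i:{..length w}.
     runs {False} q1 q (take i w) \<times> runs UNIV q q2 (drop i w))"

definition join_factors :: "nat \<times> nat \<times> ('d tok list \<times> 'd atext) \<times> ('d tok list \<times> 'd atext)
    \<Rightarrow> 'd tok list \<times> 'd atext" where
  "join_factors = (\<lambda>(q, i, (r1, t1), (r2, t2)). (r1 @ r2, glue q t1 t2))"

lemma glue_cancel:
  assumes "glue q t1 t2 = glue q t1' t2'" "length (fst t1) = length (fst t1')"
    and "wf_text t1" "wf_text t1'" "wf_text t2" "wf_text t2'"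
  shows "t1 = t1' \<and> t2 = t2'"
proof (cases "q \<in> H")
  case True
  with assms(1) have "tcomp t1 t2 = tcomp t1' t2'"
    by (simp add: glue_def)
  with assms(2-4) show ?thesis
    by (intro tcomp_cancel) (simp_all add: wf_text_def)
next
  case False
  with assms(1) have "tbullet t1 t2 = tbullet t1' t2'"
    by (simp add: glue_def)
  with assms(2,5,6) show ?thesis
    by (intro tbullet_cancel) (simp_all add: wf_text_def)
qed

lemma inj_on_join_factors: "inj_on join_factors (conc_factors q1 q2 w)"
proof
  fix d d'
  assume "d \<in> conc_factors q1 q2 w" "d' \<in> conc_factors q1 q2 w" "join_factors d = join_factors d'"
  moreover obtain q i r1 t1 r2 t2 where d: "d = (q, i, (r1, t1), (r2, t2))"
    by (metis prod.exhaust)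
  moreover obtain q' i' r1' t1' r2' t2' where d': "d' = (q', i', (r1', t1'), (r2', t2'))"
    by (metis prod.exhaust)
  ultimately obtain b2 b2' where
    R1: "is_run H V Om r1 q1 q t1 False" "fst t1 = take i w" "i \<le> length w" and
    R2: "is_run H V Om r2 q q2 t2 b2" and
    R1': "is_run H V Om r1' q1 q' t1' False" "fst t1' = take i' w" "i' \<le> length w" and
    R2': "is_run H V Om r2' q' q2 t2' b2'" and
    runs_eq: "r1 @ r2 = r1' @ r2'" and labels_eq: "glue q t1 t2 = glue q' t1' t2'"
    by (auto simp: conc_factors_def runs_def join_factors_def)
  have "r1 = r1'"
    using unit_run_prefix_unique[OF runs_eq R1(1) R1'(1)] .
  with runs_eq have "r2 = r2'"
    by simp
  have "q = q'"
    using is_run_target[OF R1(1)] is_run_target[OF R1'(1)] \<open>r1 = r1'\<close> by simp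
  have "length (fst t1) = length (fst t1')"
    using is_run_word[OF R1(1)] is_run_word[OF R1'(1)] \<open>r1 = r1'\<close> by simp
  moreover have "wf_text t1" "wf_text t1'" "wf_text t2" "wf_text t2'"
    using R1 R1' R2 R2' by (auto intro: is_run_wf_label)
  ultimately have "t1 = t1' \<and> t2 = t2'"
    using glue_cancel labels_eq \<open>q = q'\<close> by blast
  moreover from this have "i = i'"
    using R1 R1' by (metis length_take min.absorb2)
  ultimately show "d = d'"
    using d d' \<open>r1 = r1'\<close> \<open>r2 = r2'\<close> \<open>q = q'\<close> by simp
qed

lemma join_factors_mem_runs:
  assumes "d \<in> conc_factors q1 q2 w"
  shows "join_factors d \<in> runs {True} q1 q2 w"
proof -
  obtain q i r1 t1 r2 t2 where d: "d = (q, i, (r1, t1), (r2, t2))"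
    by (metis prod.exhaust)
  with assms obtain b2 where "q \<in> states"
    and R1: "is_run H V Om r1 q1 q t1 False" "fst t1 = take i w"
    and R2: "is_run H V Om r2 q q2 t2 b2" "fst t2 = drop i w"
    by (auto simp: conc_factors_def mem_runs)
  have "is_run H V Om (r1 @ r2) q1 q2 (glue q t1 t2) True"
  proof (cases "q \<in> H")
    case True
    then show ?thesis using is_run.concH[OF R1(1) R2(1)] by (simp add: glue_def)
  next
    case False
    with \<open>q \<in> states\<close> have "q \<in> V" by simp
    with False show ?thesis using is_run.concV[OF R1(1) R2(1)] by (simp add: glue_def)
  qed
  with d R1(2) R2(2) show ?thesis
    by (simp add: join_factors_def)
qed

lemma conc_run_mem_join_factors:
  assumes "p \<in> runs {True} q1 q2 w"
  shows "p \<in> join_factors ` conc_factors q1 q2 w"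
proof -
  obtain r t where p: "p = (r, t)" and R: "is_run H V Om r q1 q2 t True" "fst t = w"
    using assms by (auto simp: runs_def)
  obtain q r1 t1 r2 t2 b2 where split: "r = r1 @ r2"
    "is_run H V Om r1 q1 q t1 False" "is_run H V Om r2 q q2 t2 b2"
    "q \<in> H \<and> t = tcomp t1 t2 \<or> q \<in> V \<and> t = tbullet t1 t2"
    using conc_run_split[OF R(1) disjoint_HV] .
  have "q \<in> states" "t = glue q t1 t2"
    using split(4) disjoint_HV by (auto simp: glue_def)
  define i where "i = length (fst t1)"
  have "take i w = fst t1" "drop i w = fst t2" "i \<le> length w"
    using R(2) \<open>t = glue q t1 t2\<close> by (auto simp: i_def)
  with split(2,3) \<open>q \<in> states\<close> have "(q, i, (r1, t1), (r2, t2)) \<in> conc_factors q1 q2 w"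
    unfolding conc_factors_def by (auto simp: mem_runs)
  moreover have "p = join_factors (q, i, (r1, t1), (r2, t2))"
    using p split(1) \<open>t = glue q t1 t2\<close> by (simp add: join_factors_def)
  ultimately show ?thesis
    by blast
qed

lemma join_factors_image: "join_factors ` conc_factors q1 q2 w = runs {True} q1 q2 w"
  using join_factors_mem_runs conc_run_mem_join_factors by blast

lemma run_series_conc:
  "run_series {True} q1 q2 w = (\<Sum>q\<in>states. cauchy (run_series {False} q1 q) (run_series UNIV q q2) w)"
proof -
  let ?wt = "\<lambda>p. run_weight mu mop mcl (fst p)"
  have "(\<Sum>q\<in>states. cauchy (run_series {False} q1 q) (run_series UNIV q q2) w)
      = (\<Sum>q\<in>states. \<Sum>i\<le>length w.
          \<Sum>xy\<in>runs {False} q1 q (take i w) \<times> runs UNIV q q2 (drop i w). ?wt (fst xy) * ?wt (snd xy))"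
    by (simp add: cauchy_def run_series_def sum_product sum.cartesian_product split_def)
  also have "\<dots> = (\<Sum>d\<in>conc_factors q1 q2 w. ?wt (join_factors d))"
    unfolding conc_factors_def using finite_states finite_runs
    by (simp add: sum.Sigma finite_SigmaI split_def join_factors_def run_weight_def)
  also have "\<dots> = run_series {True} q1 q2 w"
    using sum.reindex[OF inj_on_join_factors, of ?wt]
    by (simp add: run_series_def join_factors_image)
  finally show ?thesis ..
qed

definition atom_states :: "nat \<Rightarrow> nat \<Rightarrow> bool" where
  "atom_states q1 q2 \<longleftrightarrow> (q1 \<in> H \<and> q2 \<in> H) \<or> (q1 \<in> V \<and> q2 \<in> V)"

definition paren_states :: "nat \<Rightarrow> nat \<Rightarrow> nat \<Rightarrow> bool" where
  "paren_states q1 p1 q2 \<longleftrightarrow> (p1 \<in> H \<and> q1 \<in> V \<and> q2 \<in> V) \<or> (p1 \<in> V \<and> q1 \<in> H \<and> q2 \<in> H)"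

definition atom_run :: "nat \<Rightarrow> nat \<Rightarrow> 'd \<Rightarrow> 'd tok list \<times> 'd atext" where
  "atom_run q1 q2 a = ([Atom q1 a q2], singleton_text a)"

definition paren_factors :: "nat \<Rightarrow> nat \<Rightarrow> 'd list
    \<Rightarrow> (nat \<times> nat \<times> nat \<times> ('d tok list \<times> 'd atext)) set" where
  "paren_factors q1 q2 w = (SIGMA s:Om. SIGMA p1:{p1 \<in> states. paren_states q1 p1 q2}.
     SIGMA p2:states. runs {True} p1 p2 w)"

definition wrap_factors :: "nat \<Rightarrow> nat \<Rightarrow> nat \<times> nat \<times> nat \<times> ('d tok list \<times> 'd atext)
    \<Rightarrow> 'd tok list \<times> 'd atext" where
  "wrap_factors q1 q2 = (\<lambda>(s, p1, p2, (r, t)). ([Opn q1 s p1] @ r @ [Cls p2 s q2], t))"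

lemma wrap_factors_mem_runs:
  assumes "d \<in> paren_factors q1 q2 w"
  shows "wrap_factors q1 q2 d \<in> runs {False} q1 q2 w"
proof -
  obtain s p1 p2 m t where d: "d = (s, p1, p2, (m, t))"
    by (metis prod.exhaust)
  with assms have "fst t = w" and R: "is_run H V Om m p1 p2 t True" "s \<in> Om" "paren_states q1 p1 q2"
    by (auto simp: paren_factors_def mem_runs)
  from R have "is_run H V Om ([Opn q1 s p1] @ m @ [Cls p2 s q2]) q1 q2 t False"
    unfolding paren_states_def by (rule is_run.paren)
  with d \<open>fst t = w\<close> show ?thesis
    by (simp add: wrap_factors_def)
qed

lemma unit_run_cases:
  assumes "p \<in> runs {False} q1 q2 w"
  shows "p \<in> atom_run q1 q2 ` {a. atom_states q1 q2 \<and> w = [a]} \<union> wrap_factors q1 q2 ` paren_factors q1 q2 w"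
proof -
  obtain r t where p: "p = (r, t)" and R: "is_run H V Om r q1 q2 t False" "fst t = w"
    using assms by (auto simp: runs_def)
  from R(1) show ?thesis
  proof (cases rule: is_run.cases)
    case (atom a)
    with p R(2) show ?thesis
      by (auto simp: atom_run_def atom_states_def singleton_text_def)
  next
    case (paren m p1 p2 s)
    then have "(s, p1, p2, (m, t)) \<in> paren_factors q1 q2 w"
      using R(2) is_run_states[OF paren(2)] by (auto simp: paren_factors_def paren_states_def mem_runs)
    moreover have "p = wrap_factors q1 q2 (s, p1, p2, (m, t))"
      using p paren(1) by (simp add: wrap_factors_def)
    ultimately show ?thesis
      by blast
  qed simp_all
qed

lemma unit_runs_split:
  "runs {False} q1 q2 w =
     atom_run q1 q2 ` {a. atom_states q1 q2 \<and> w = [a]} \<union> wrap_factors q1 q2 ` paren_factors q1 q2 w"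
proof (intro equalityI subsetI)
  fix p
  assume "p \<in> atom_run q1 q2 ` {a. atom_states q1 q2 \<and> w = [a]} \<union> wrap_factors q1 q2 ` paren_factors q1 q2 w"
  then show "p \<in> runs {False} q1 q2 w"
    by (auto simp: atom_run_def atom_states_def intro: is_run.atom wrap_factors_mem_runs)
qed (rule unit_run_cases)

lemma run_series_unit:
  "run_series {False} q1 q2 w =
     (\<Sum>a\<in>UNIV. (if atom_states q1 q2 then mu q1 a q2 else 0) * char_ser [a] w) +
     (\<Sum>s\<in>Om. \<Sum>p1\<in>{p1 \<in> states. paren_states q1 p1 q2}. \<Sum>p2\<in>states.
        mop q1 s p1 * mcl p2 s q2 * run_series {True} p1 p2 w)"
proof -
  let ?wt = "\<lambda>p. run_weight mu mop mcl (fst p)"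
  let ?A = "{a. atom_states q1 q2 \<and> w = [a]}"
  have inj_atom: "inj_on (atom_run q1 q2) ?A"
    by (auto simp: inj_on_def atom_run_def)
  have inj_wrap: "inj_on (wrap_factors q1 q2) (paren_factors q1 q2 w)"
    by (auto simp: inj_on_def wrap_factors_def)
  have finite_paren: "finite (paren_factors q1 q2 w)"
    unfolding paren_factors_def using finite_Om finite_states finite_runs by (intro finite_SigmaI) auto
  have "atom_run q1 q2 ` ?A \<inter> wrap_factors q1 q2 ` paren_factors q1 q2 w = {}"
    by (auto simp: atom_run_def wrap_factors_def)
  then have "run_series {False} q1 q2 w =
      (\<Sum>p\<in>atom_run q1 q2 ` ?A. ?wt p) + (\<Sum>p\<in>wrap_factors q1 q2 ` paren_factors q1 q2 w. ?wt p)"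
    unfolding run_series_def unit_runs_split using finite_paren by (simp add: sum.union_disjoint)
  also have "(\<Sum>p\<in>atom_run q1 q2 ` ?A. ?wt p) = (\<Sum>a\<in>?A. mu q1 a q2)"
    using sum.reindex[OF inj_atom, of ?wt] by (simp add: atom_run_def run_weight_def)
  also have "\<dots> = (\<Sum>a\<in>UNIV. if atom_states q1 q2 \<and> w = [a] then mu q1 a q2 else 0)"
    using sum.inter_filter[of UNIV "\<lambda>a. mu q1 a q2" "\<lambda>a. atom_states q1 q2 \<and> w = [a]"] by simp
  also have "\<dots> = (\<Sum>a\<in>UNIV. (if atom_states q1 q2 then mu q1 a q2 else 0) * char_ser [a] w)"
    by (rule sum.cong) (auto simp: char_ser_def)
  also have "(\<Sum>p\<in>wrap_factors q1 q2 ` paren_factors q1 q2 w. ?wt p)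
      = (\<Sum>d\<in>paren_factors q1 q2 w. ?wt (wrap_factors q1 q2 d))"
    using sum.reindex[OF inj_wrap, of ?wt] by simp
  also have "\<dots> = (\<Sum>s\<in>Om. \<Sum>p1\<in>{p1 \<in> states. paren_states q1 p1 q2}. \<Sum>p2\<in>states.
        mop q1 s p1 * mcl p2 s q2 * run_series {True} p1 p2 w)"
    unfolding paren_factors_def run_series_def using finite_Om finite_states finite_runs
    by (simp add: sum.Sigma split_def sum_distrib_left wrap_factors_def
        run_weight_def mult_ac)
  finally show ?thesis .
qed

lemma sum_runs_labelled_word:
  "(\<Sum>t\<in>{t \<in> TXT. fst t = w}. \<Sum>r\<in>{r. \<exists>b. is_run H V Om r q1 q2 t b}. run_weight mu mop mcl r)
     = run_series UNIV q1 q2 w"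
proof -
  let ?T = "{t \<in> TXT. fst t = w}"
  let ?R = "\<lambda>t. {r. \<exists>b. is_run H V Om r q1 q2 t b}"
  have "finite ?T"
    by (rule finite_subset[OF _ finite_wf_texts_word]) (auto intro: TXT_wf_text)
  moreover have "finite (?R t)" for t :: "'d atext"
  proof (rule finite_subset)
    show "?R t \<subseteq> fst ` runs UNIV q1 q2 (fst t)"
      by (auto simp: runs_def intro: image_eqI[of _ fst "(r, t)" for r])
  qed (simp add: finite_runs)
  ultimately have "(\<Sum>t\<in>?T. \<Sum>r\<in>?R t. run_weight mu mop mcl r)
      = (\<Sum>x\<in>Sigma ?T ?R. run_weight mu mop mcl (snd x))"
    by (simp add: sum.Sigma split_def)
  also have "Sigma ?T ?R = prod.swap ` runs UNIV q1 q2 w"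
    by (auto simp: runs_def image_iff intro: is_run_label_TXT)
  also have "(\<Sum>x\<in>prod.swap ` runs UNIV q1 q2 w. run_weight mu mop mcl (snd x)) = run_series UNIV q1 q2 w"
    by (simp add: sum.reindex run_series_def)
  finally show ?thesis .
qed

lemma proj_behaviour:
  assumes "\<forall>t\<in>TXT. S t = wpa_behaviour H V Om mu mop mcl lam gam t"
  shows "proj S w = (\<Sum>q1\<in>states. \<Sum>q2\<in>states. lam q1 * gam q2 * run_series UNIV q1 q2 w)"
proof -
  define T where "T = {t \<in> TXT. fst t = w}"
  define R where "R = (\<lambda>q1 q2 (t :: 'd atext). {r. \<exists>b. is_run H V Om r q1 q2 t b})"
  have "proj S w = (\<Sum>t\<in>T. \<Sum>q1\<in>states. \<Sum>q2\<in>states.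
      lam q1 * gam q2 * (\<Sum>r\<in>R q1 q2 t. run_weight mu mop mcl r))"
    unfolding proj_def T_def R_def using assms by (intro sum.cong) (auto simp: wpa_behaviour_def mult_ac)
  also have "\<dots> = (\<Sum>q1\<in>states. \<Sum>q2\<in>states. \<Sum>t\<in>T.
      lam q1 * gam q2 * (\<Sum>r\<in>R q1 q2 t. run_weight mu mop mcl r))"
    by (simp add: sum.swap[of _ T])
  also have "\<dots> = (\<Sum>q1\<in>states. \<Sum>q2\<in>states. lam q1 * gam q2 * run_series UNIV q1 q2 w)"
    by (simp add: sum_distrib_left[symmetric] sum_runs_labelled_word T_def R_def)
  finally show ?thesis .
qed

end

section \<open>Evaluating polynomials at a tuple of series\<close>

lemma cauchy_char_ser_Nil: "cauchy F (char_ser []) = F"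
proof
  fix w :: "'a list"
  have "(\<Sum>i\<le>length w. F (take i w) * char_ser [] (drop i w))
      = (\<Sum>i\<in>{length w}. F (take i w) * char_ser [] (drop i w))"
    by (rule sum.mono_neutral_right) (auto simp: char_ser_def)
  then show "cauchy F (char_ser []) w = F w"
    by (simp add: cauchy_def char_ser_def)
qed

lemma cauchy_add_right: "cauchy F G w + cauchy F G' w = cauchy F (\<lambda>u. G u + G' u) w"
  by (simp add: cauchy_def distrib_left sum.distrib)

definition mono_poly :: "('d + nat) list \<Rightarrow> 'k::zero \<Rightarrow> ('d + nat) list \<Rightarrow> 'k" where
  "mono_poly m0 c m = (if m = m0 then c else 0)"

definition poly_eval :: "('d + nat) list set \<Rightarrow> (nat \<Rightarrow> ('d, 'k::comm_semiring_1) fpser)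
    \<Rightarrow> (('d + nat) list \<Rightarrow> 'k) \<Rightarrow> ('d, 'k) fpser" where
  "poly_eval M Sol P w = (\<Sum>m\<in>M. P m * subst_word Sol m w)"

lemma poly_eval_add: "poly_eval M Sol (\<lambda>m. P m + P' m) w = poly_eval M Sol P w + poly_eval M Sol P' w"
  by (simp add: poly_eval_def distrib_right sum.distrib)

lemma poly_eval_scale: "poly_eval M Sol (\<lambda>m. c * P m) w = c * poly_eval M Sol P w"
  by (simp add: poly_eval_def sum_distrib_left mult.assoc)

lemma poly_eval_sum: "poly_eval M Sol (\<lambda>m. \<Sum>j\<in>J. P j m) w = (\<Sum>j\<in>J. poly_eval M Sol (P j) w)"
  by (simp add: poly_eval_def sum_distrib_right sum.swap[of _ M])

lemma poly_eval_mono_poly: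
  assumes "finite M" "m0 \<in> M"
  shows "poly_eval M Sol (mono_poly m0 c) w = c * subst_word Sol m0 w"
proof -
  have "poly_eval M Sol (mono_poly m0 c) w = (\<Sum>m\<in>{m0}. mono_poly m0 c m * subst_word Sol m w)"
    unfolding poly_eval_def using assms by (intro sum.mono_neutral_right) (auto simp: mono_poly_def)
  then show ?thesis
    by (simp add: mono_poly_def)
qed

lemma poly_eval_eq_sum_support:
  assumes "finite M" "poly_support P \<subseteq> M"
  shows "(\<Sum>m\<in>poly_support P. P m * subst_word Sol m w) = poly_eval M Sol P w"
  unfolding poly_eval_def using assms by (intro sum.mono_neutral_left) (auto simp: poly_support_def)

section \<open>The algebraic system of an automaton\<close>

definition var_unit :: "nat \<Rightarrow> nat \<Rightarrow> nat" where
  "var_unit q1 q2 = Suc (prod_encode (0, prod_encode (q1, q2)))"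

definition var_conc :: "nat \<Rightarrow> nat \<Rightarrow> nat" where
  "var_conc q1 q2 = Suc (prod_encode (1, prod_encode (q1, q2)))"

context wpa
begin

text \<open>Variable 0 stands for the projection of the behaviour, var_unit q1 q2 and var_conc q1 q2
  for the series of runs from q1 to q2 not ending, resp. ending, with rule (2).\<close>

definition vars :: "nat set" where
  "vars = insert 0 ((\<lambda>(q1, q2). var_unit q1 q2) ` (states \<times> states)
     \<union> (\<lambda>(q1, q2). var_conc q1 q2) ` (states \<times> states))"

definition top_series :: "('d, 'k) fpser" where
  "top_series w = (\<Sum>q1\<in>states. \<Sum>q2\<in>states. lam q1 * gam q2 * run_series UNIV q1 q2 w)"

definition solution :: "nat \<Rightarrow> ('d, 'k) fpser" where
  "solution X = (if X = 0 then top_series else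
     (case prod_decode (X - 1) of (k, c) \<Rightarrow> case prod_decode c of (q1, q2) \<Rightarrow>
        if k = 0 then run_series {False} q1 q2 else run_series {True} q1 q2))"

definition poly_conc :: "nat \<Rightarrow> nat \<Rightarrow> ('d + nat) list \<Rightarrow> 'k" where
  "poly_conc q1 q2 m = (\<Sum>q\<in>states. mono_poly [Inr (var_unit q1 q), Inr (var_unit q q2)] 1 m
     + mono_poly [Inr (var_unit q1 q), Inr (var_conc q q2)] 1 m)"

definition poly_unit :: "nat \<Rightarrow> nat \<Rightarrow> ('d + nat) list \<Rightarrow> 'k" where
  "poly_unit q1 q2 m = (\<Sum>a\<in>UNIV. mono_poly [Inl a] (if atom_states q1 q2 then mu q1 a q2 else 0) m) +
     (\<Sum>s\<in>Om. \<Sum>p1\<in>{p1 \<in> states. paren_states q1 p1 q2}. \<Sum>p2\<in>states.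
        mop q1 s p1 * mcl p2 s q2 * poly_conc p1 p2 m)"

text \<open>The equation for variable 0 is that of U + C, expanded so that the system stays proper.\<close>

definition poly_top :: "('d + nat) list \<Rightarrow> 'k" where
  "poly_top m = (\<Sum>q1\<in>states. \<Sum>q2\<in>states. lam q1 * gam q2 * (poly_unit q1 q2 m + poly_conc q1 q2 m))"

definition system :: "nat \<Rightarrow> ('d + nat) list \<Rightarrow> 'k" where
  "system X = (if X = 0 then poly_top else
     (case prod_decode (X - 1) of (k, c) \<Rightarrow> case prod_decode c of (q1, q2) \<Rightarrow>
        if k = 0 then poly_unit q1 q2 else poly_conc q1 q2))"

definition monomials :: "('d + nat) list set" where
  "monomials = {m. set m \<subseteq> range Inl \<union> Inr ` vars \<and> length m \<le> 2}"

lemma solution_top [simp]: "solution 0 = top_series"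
  and solution_unit [simp]: "solution (var_unit q1 q2) = run_series {False} q1 q2"
  and solution_conc [simp]: "solution (var_conc q1 q2) = run_series {True} q1 q2"
  by (simp_all add: solution_def var_unit_def var_conc_def)

lemma system_top [simp]: "system 0 = poly_top"
  and system_unit [simp]: "system (var_unit q1 q2) = poly_unit q1 q2"
  and system_conc [simp]: "system (var_conc q1 q2) = poly_conc q1 q2"
  by (simp_all add: system_def var_unit_def var_conc_def)

lemma vars_cases:
  assumes "X \<in> vars"
  obtains "X = 0"
    | q1 q2 where "q1 \<in> states" "q2 \<in> states" "X = var_unit q1 q2"
    | q1 q2 where "q1 \<in> states" "q2 \<in> states" "X = var_conc q1 q2"
  using assms unfolding vars_def by (auto simp: image_iff)

lemma finite_vars: "finite vars"
  unfolding vars_def using finite_states by simp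

lemma finite_monomials: "finite monomials"
  unfolding monomials_def using finite_vars by (intro finite_lists_length_le) auto

lemma var_unit_mem_vars: "q1 \<in> states \<Longrightarrow> q2 \<in> states \<Longrightarrow> var_unit q1 q2 \<in> vars"
  and var_conc_mem_vars: "q1 \<in> states \<Longrightarrow> q2 \<in> states \<Longrightarrow> var_conc q1 q2 \<in> vars"
  by (auto simp: vars_def)

lemma mem_monomials_var_pair: "X \<in> vars \<Longrightarrow> Y \<in> vars \<Longrightarrow> [Inr X, Inr Y] \<in> monomials"
  and mem_monomials_letter: "[Inl a] \<in> monomials"
  by (auto simp: monomials_def)

lemma poly_conc_eq_0: "q1 \<in> states \<Longrightarrow> q2 \<in> states \<Longrightarrow> m \<notin> monomials \<Longrightarrow> poly_conc q1 q2 m = 0"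
  unfolding poly_conc_def mono_poly_def monomials_def
  by (intro sum.neutral) (auto simp: var_unit_mem_vars var_conc_mem_vars)

lemma poly_unit_eq_0:
  assumes "q1 \<in> states" "q2 \<in> states" "m \<notin> monomials"
  shows "poly_unit q1 q2 m = 0"
proof -
  from assms(3) have "mono_poly [Inl a] c m = 0" for a and c :: 'k
    using mem_monomials_letter by (auto simp: mono_poly_def)
  with assms show ?thesis
    by (simp add: poly_unit_def poly_conc_eq_0)
qed

lemma system_eq_0:
  assumes "X \<in> vars" "m \<notin> monomials"
  shows "system X m = 0"
  using assms(1)
proof (cases rule: vars_cases)
  case 1
  have "poly_unit q1 q2 m + poly_conc q1 q2 m = 0" if "q1 \<in> states" "q2 \<in> states" for q1 q2
    using that assms(2) by (simp add: poly_unit_eq_0 poly_conc_eq_0)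
  then show ?thesis
    unfolding 1 system_top poly_top_def by (intro sum.neutral ballI) simp
qed (use assms(2) poly_unit_eq_0 poly_conc_eq_0 in simp_all)

lemma poly_support_system: "X \<in> vars \<Longrightarrow> poly_support (system X) \<subseteq> monomials"
  unfolding poly_support_def using system_eq_0 by blast

lemma alg_system_system: "alg_system vars system"
  unfolding alg_system_def
proof (intro conjI ballI allI impI finite_vars)
  fix X assume X: "X \<in> vars"
  show "finite (poly_support (system X))"
    using poly_support_system[OF X] finite_monomials by (rule finite_subset)
  fix m Y assume "m \<in> poly_support (system X)" "Inr Y \<in> set m"
  then show "Y \<in> vars"
    using poly_support_system[OF X] unfolding monomials_def by auto
qed

lemma proper_system_system: "proper_system vars system"
  unfolding proper_system_def
  by (auto elim!: vars_cases simp: poly_top_def poly_unit_def poly_conc_def mono_poly_def)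

lemma quasiregular_solution: "X \<in> vars \<Longrightarrow> quasiregular (solution X)"
  by (erule vars_cases) (simp_all add: quasiregular_def top_series_def run_series_Nil)

lemma poly_eval_conc:
  assumes "q1 \<in> states" "q2 \<in> states"
  shows "poly_eval monomials solution (poly_conc q1 q2) w = run_series {True} q1 q2 w"
proof -
  have "poly_eval monomials solution (poly_conc q1 q2) w
      = (\<Sum>q\<in>states. poly_eval monomials solution (mono_poly [Inr (var_unit q1 q), Inr (var_unit q q2)] 1) w
          + poly_eval monomials solution (mono_poly [Inr (var_unit q1 q), Inr (var_conc q q2)] 1) w)"
    unfolding poly_conc_def[abs_def] poly_eval_sum poly_eval_add ..
  also have "\<dots> = (\<Sum>q\<in>states. cauchy (run_series {False} q1 q) (run_series {False} q q2) w
      + cauchy (run_series {False} q1 q) (run_series {True} q q2) w)"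
    using assms by (intro sum.cong refl)
      (simp add: poly_eval_mono_poly finite_monomials mem_monomials_var_pair var_unit_mem_vars
        var_conc_mem_vars cauchy_char_ser_Nil)
  also have "\<dots> = (\<Sum>q\<in>states. cauchy (run_series {False} q1 q) (run_series UNIV q q2) w)"
    by (simp add: cauchy_add_right run_series_UNIV[abs_def])
  also have "\<dots> = run_series {True} q1 q2 w"
    by (rule run_series_conc[symmetric])
  finally show ?thesis .
qed

lemma poly_eval_unit:
  assumes "q1 \<in> states" "q2 \<in> states"
  shows "poly_eval monomials solution (poly_unit q1 q2) w = run_series {False} q1 q2 w"
proof -
  have "poly_eval monomials solution (poly_unit q1 q2) w
      = (\<Sum>a\<in>UNIV. poly_eval monomials solution
            (mono_poly [Inl a] (if atom_states q1 q2 then mu q1 a q2 else 0)) w) +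
        (\<Sum>s\<in>Om. \<Sum>p1\<in>{p1 \<in> states. paren_states q1 p1 q2}. \<Sum>p2\<in>states.
            mop q1 s p1 * mcl p2 s q2 * poly_eval monomials solution (poly_conc p1 p2) w)"
    unfolding poly_unit_def[abs_def] poly_eval_sum poly_eval_add poly_eval_scale ..
  also have "\<dots> = (\<Sum>a\<in>UNIV. (if atom_states q1 q2 then mu q1 a q2 else 0) * char_ser [a] w) +
        (\<Sum>s\<in>Om. \<Sum>p1\<in>{p1 \<in> states. paren_states q1 p1 q2}. \<Sum>p2\<in>states.
            mop q1 s p1 * mcl p2 s q2 * run_series {True} p1 p2 w)"
    by (simp add: poly_eval_mono_poly finite_monomials mem_monomials_letter cauchy_char_ser_Nil
        poly_eval_conc)
  also have "\<dots> = run_series {False} q1 q2 w"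
    by (rule run_series_unit[symmetric])
  finally show ?thesis .
qed

lemma poly_eval_top: "poly_eval monomials solution poly_top w = top_series w"
proof -
  have "poly_eval monomials solution poly_top w = (\<Sum>q1\<in>states. \<Sum>q2\<in>states. lam q1 * gam q2 *
      (poly_eval monomials solution (poly_unit q1 q2) w + poly_eval monomials solution (poly_conc q1 q2) w))"
    unfolding poly_top_def[abs_def] poly_eval_sum poly_eval_scale poly_eval_add ..
  also have "\<dots> = top_series w"
    unfolding top_series_def by (intro sum.cong refl) (simp add: poly_eval_unit poly_eval_conc run_series_UNIV)
  finally show ?thesis .
qed

lemma is_solution_solution: "is_solution vars system solution"
  unfolding is_solution_def
proof (intro ballI allI)
  fix X w
  assume X: "X \<in> vars"
  have "(\<Sum>m\<in>poly_support (system X). system X m * subst_word solution m w)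
      = poly_eval monomials solution (system X) w"
    by (rule poly_eval_eq_sum_support[OF finite_monomials poly_support_system[OF X]])
  also have "\<dots> = solution X w"
    using X by (cases rule: vars_cases) (simp_all add: poly_eval_top poly_eval_unit poly_eval_conc)
  finally show "solution X w = (\<Sum>m\<in>poly_support (system X). system X m * subst_word solution m w)" ..
qed

lemma algebraic_top_series: "algebraic_series top_series"
proof -
  have "0 \<in> vars"
    by (simp add: vars_def)
  then show ?thesis
    unfolding algebraic_series_def
    using alg_system_system proper_system_system is_solution_solution quasiregular_solution
      solution_top by blast
qed

end

theorem proposition6p11:
  fixes S :: "'d::finite atext \<Rightarrow> 'k::comm_semiring_1"
  assumes "(0::'k) \<noteq> 1"
    and "regular_text_series S"
  shows "algebraic_series (proj S)"
proof -
  from assms(2) obtain H V Om and mu :: "nat \<Rightarrow> 'd \<Rightarrow> nat \<Rightarrow> 'k" and mop mcl lam gam where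
    "finite H" "finite V" "H \<inter> V = {}" "finite Om"
    and behaviour: "\<forall>t\<in>TXT. S t = wpa_behaviour H V Om mu mop mcl lam gam t"
    unfolding regular_text_series_def by blast
  then interpret wpa H V Om mu mop mcl lam gam
    by unfold_locales
  have "proj S = top_series"
    using proj_behaviour[OF behaviour] by (simp add: fun_eq_iff top_series_def)
  with algebraic_top_series show ?thesis
    by simp
qed

end
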